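(* Let $K$ be a field, $I\subset R=K[x_1,\ldots,x_n]$ a square-free monomial ideal, and $1\le i\le n$. If $I$ has the copersistence property, then the deletion $I\setminus x_i$ has the copersistence property.
   Context: An ideal $I$ in a commutative Noetherian ring $R$ has the copersistence property if $\mathrm{Ass}_R(R/I^k)\supseteq\mathrm{Ass}_R(R/I^{k+1})$ for all $k\ge1$. If $\{u_1,\ldots,u_m\}$ is the minimal monomial generating set of $I$, the deletion $I\setminus x_i$ is the monomial ideal (in the polynomial ring over $K$ in the variables other than $x_i$) generated by the polynomials obtained from $u_1,\ldots,u_m$ by setting $x_i=0$, i.e. by those $u_k$ not divisible by $x_i$. *)

theory Defs
  imports "HOL-Library.Poly_Mapping" "HOL-Algebra.Ideal_Product"
begin

text \<open>Polynomials over a field K in variables indexed by natural numbers: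
  a polynomial is a finitely supported map from monomials (exponent vectors
  nat =>0 nat) to coefficients.  The polynomial ring K[x_v : v \<in> V]
  is the subring of those polynomials whose monomials only involve
  variables from V.\<close>

type_synonym 'k mpoly = "(nat \<Rightarrow>\<^sub>0 nat) \<Rightarrow>\<^sub>0 'k"

definition poly_ring :: "nat set \<Rightarrow> 'k::field mpoly ring" where
  "poly_ring V = \<lparr> carrier = {p :: 'k mpoly. \<forall>m \<in> Poly_Mapping.keys p. Poly_Mapping.keys m \<subseteq> V},
                   mult = (*), one = 1, zero = 0, add = (+) \<rparr>"

definition monomial :: "(nat \<Rightarrow>\<^sub>0 nat) \<Rightarrow> 'k::field mpoly" where
  "monomial a = Poly_Mapping.single a 1"

definition ideal_power :: "('a, 'b) ring_scheme \<Rightarrow> 'a set \<Rightarrow> nat \<Rightarrow> 'a set" where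
  "ideal_power R I k = I [^]\<^bsub>ideals_set R\<^esub> k"

text \<open>Associated primes of the R-module R/I: prime ideals P of R that are
  annihilators of some element a + I of R/I, i.e. P = (I : a).\<close>
definition Ass :: "('a, 'b) ring_scheme \<Rightarrow> 'a set \<Rightarrow> 'a set set" where
  "Ass R I = {P. primeideal P R \<and>
                 (\<exists>a \<in> carrier R. P = {r \<in> carrier R. r \<otimes>\<^bsub>R\<^esub> a \<in> I})}"

definition copersistent :: "('a, 'b) ring_scheme \<Rightarrow> 'a set \<Rightarrow> bool" where
  "copersistent R I \<longleftrightarrow>
     (\<forall>k \<ge> 1. Ass R (ideal_power R I (k + 1)) \<subseteq> Ass R (ideal_power R I k))"

text \<open>G is the minimal monomial generating set of a square-free monomial ideal
  of K[x_v : v \<in> V]: finitely many square-free exponent vectors supported in V,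
  pairwise incomparable under divisibility.\<close>
definition minimal_sqfree_gens :: "nat set \<Rightarrow> (nat \<Rightarrow>\<^sub>0 nat) set \<Rightarrow> bool" where
  "minimal_sqfree_gens V G \<longleftrightarrow> finite G \<and>
     (\<forall>u \<in> G. Poly_Mapping.keys u \<subseteq> V \<and> (\<forall>v. Poly_Mapping.lookup u v \<le> 1)) \<and>
     (\<forall>u \<in> G. \<forall>w \<in> G. (\<forall>v. Poly_Mapping.lookup u v \<le> Poly_Mapping.lookup w v) \<longrightarrow> u = w)"

definition deletion :: "nat set \<Rightarrow> (nat \<Rightarrow>\<^sub>0 nat) set \<Rightarrow> nat \<Rightarrow> 'k::field mpoly set" where
  "deletion V G i = genideal (poly_ring (V - {i})) (monomial ` {u \<in> G. Poly_Mapping.lookup u i = 0})"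

end

theory Submission
  imports Defs "HOL-Library.Set_Algebras"
begin

text \<open>Let \<open>P\<^sub>F = (x\<^sub>j : j \<in> F)\<close> for the minimal vertex covers \<open>F\<close> of the generators of a
  square-free monomial ideal \<open>I\<close>. The symbolic power \<open>I\<^sup>(\<^sup>m\<^sup>)\<close> is the intersection of the
  \<open>P\<^sub>F\<^sup>m\<close>, and for every \<open>m \<ge> 1\<close> its associated primes are exactly the \<open>P\<^sub>F\<close>.
  If \<open>I\<close> is copersistent, then \<open>Ass(I\<^sup>m) \<subseteq> Ass(I) = {P\<^sub>F}\<close>. Since every monomial outside \<open>I\<^sup>m\<close>
  has a multiple outside \<open>I\<^sup>m\<close> whose colon ideal is a monomial prime, this forces \<open>I\<^sup>m = I\<^sup>(\<^sup>m\<^sup>)\<close>.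
  Every minimal cover of \<open>I\<close> with \<open>i\<close> removed contains a minimal cover of the deletion \<open>J\<close>, which
  carries the equality over to \<open>J\<^sup>m = J\<^sup>(\<^sup>m\<^sup>)\<close>; so \<open>Ass(J\<^sup>k)\<close> is the same set for all \<open>k \<ge> 1\<close>, and
  \<open>J\<close> is copersistent.\<close>

section \<open>Ideal powers and associated primes\<close>

lemma (in cring) ideal_power_0: "ideal_power R I 0 = carrier R"
  by (simp add: ideal_power_def ideals_set_def)

lemma (in cring) ideal_power_Suc: "ideal_power R I (Suc k) = ideal_prod R (ideal_power R I k) I"
proof -
  interpret ideals: comm_monoid "ideals_set R" by (rule ideals_set_is_comm_monoid)
  show ?thesis by (simp add: ideal_power_def ideals_set_def)
qed

lemma Ass_ideal_power_subset_if_copersistent: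
  assumes cop: "copersistent R I" and one: "ideal_power R I 1 = I"
  shows "1 \<le> k \<Longrightarrow> Ass R (ideal_power R I k) \<subseteq> Ass R I"
proof (induction k rule: dec_induct)
  case (step k)
  then show ?case using cop by (auto simp: copersistent_def)
qed (simp add: one[unfolded One_nat_def])

lemma (in primeideal) mem_if_pow_mem:
  assumes "a \<in> carrier R" "a [^] (n::nat) \<in> I" "n \<ge> 1"
  shows "a \<in> I"
  using assms(2,3)
proof (induction n)
  case (Suc n)
  show ?case
  proof (cases "n = 0")
    case True
    then show ?thesis using Suc.prems(1) assms(1) by simp
  next
    case False
    have "a [^] n \<otimes> a \<in> I" using Suc.prems(1) by simp
    then have "a \<in> I \<or> a [^] n \<in> I"
      using I_prime[OF nat_pow_closed[OF assms(1)] assms(1)] by blast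
    then show ?thesis using Suc.IH False by auto
  qed
qed simp

lemma (in primeideal) Inter_subset_imp_subset:
  assumes fin: "finite \<F>"
    and C_carrier: "\<And>F. F \<in> \<F> \<Longrightarrow> C F \<subseteq> carrier R"
    and C_mult: "\<And>F x y. F \<in> \<F> \<Longrightarrow> x \<in> C F \<Longrightarrow> y \<in> carrier R \<Longrightarrow> x \<otimes> y \<in> C F"
    and Inter: "carrier R \<inter> (\<Inter>F\<in>\<F>. C F) \<subseteq> I"
  shows "\<exists>F\<in>\<F>. C F \<subseteq> I"
proof (rule ccontr)
  assume "\<not> (\<exists>F\<in>\<F>. C F \<subseteq> I)"
  then have outside: "\<forall>F\<in>\<F>. \<exists>x\<in>C F. x \<notin> I" by blast
  have "\<exists>y\<in>carrier R. y \<notin> I \<and> (\<forall>F\<in>\<G>. y \<in> C F)" if "\<G> \<subseteq> \<F>" for \<G>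
    using finite_subset[OF that fin] that
  proof (induction \<G> rule: finite_induct)
    case empty
    then show ?case using I_notcarr one_imp_carrier by blast
  next
    case (insert F0 \<G>)
    then obtain y where y: "y \<in> carrier R" "y \<notin> I" "\<forall>F\<in>\<G>. y \<in> C F" by auto
    obtain x where x: "x \<in> C F0" "x \<notin> I" using outside insert.prems by auto
    have x_carrier: "x \<in> carrier R" using x C_carrier insert.prems by auto
    have "x \<otimes> y \<notin> I" using I_prime[OF x_carrier y(1)] x y by auto
    moreover have "\<forall>F\<in>insert F0 \<G>. x \<otimes> y \<in> C F"
      using C_mult[of F0 x y] C_mult[of _ y x] x y x_carrier insert.prems by (auto simp: m_comm)
    ultimately show ?case using x_carrier y by (intro bexI[of _ "x \<otimes> y"]) auto
  qed
  then show False using Inter by blast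
qed

section \<open>Exponent vectors\<close>

lemma keys_plus_nat: "Poly_Mapping.keys ((a::'a \<Rightarrow>\<^sub>0 nat) + b) = Poly_Mapping.keys a \<union> Poly_Mapping.keys b"
  by (auto simp: in_keys_iff lookup_add)

lemma lookup_minus_nat:
  "Poly_Mapping.lookup ((a::'a \<Rightarrow>\<^sub>0 nat) - b) v = Poly_Mapping.lookup a v - Poly_Mapping.lookup b v"
  by (simp add: minus_poly_mapping.rep_eq)

lemma keys_minus_nat_subset: "Poly_Mapping.keys ((a::'a \<Rightarrow>\<^sub>0 nat) - b) \<subseteq> Poly_Mapping.keys a"
  by (auto simp: in_keys_iff lookup_minus_nat)

definition mono_dvd :: "('a \<Rightarrow>\<^sub>0 nat) \<Rightarrow> ('a \<Rightarrow>\<^sub>0 nat) \<Rightarrow> bool" where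
  "mono_dvd s \<kappa> \<longleftrightarrow> (\<forall>v. Poly_Mapping.lookup s v \<le> Poly_Mapping.lookup \<kappa> v)"

lemma mono_dvd_refl [simp]: "mono_dvd \<kappa> \<kappa>"
  by (simp add: mono_dvd_def)

lemma mono_dvd_trans: "mono_dvd s \<kappa> \<Longrightarrow> mono_dvd \<kappa> \<mu> \<Longrightarrow> mono_dvd s \<mu>"
  by (auto simp: mono_dvd_def intro: order_trans)

lemma mono_dvd_add_right: "mono_dvd s \<kappa> \<Longrightarrow> mono_dvd s (\<kappa> + \<mu>)"
  by (auto simp: mono_dvd_def lookup_add intro: le_add1 order_trans)

lemma mono_dvd_add_mono: "mono_dvd s \<kappa> \<Longrightarrow> mono_dvd t \<mu> \<Longrightarrow> mono_dvd (s + t) (\<kappa> + \<mu>)"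
  by (auto simp: mono_dvd_def lookup_add intro: add_mono)

lemma mono_dvd_diff_add: "mono_dvd s \<kappa> \<Longrightarrow> (\<kappa> - s) + s = \<kappa>"
  by (auto simp: mono_dvd_def lookup_add lookup_minus_nat intro!: poly_mapping_eqI)

lemma mono_dvd_single_iff: "mono_dvd (Poly_Mapping.single j c) \<kappa> \<longleftrightarrow> c \<le> Poly_Mapping.lookup \<kappa> j"
  by (auto simp: mono_dvd_def lookup_single when_def)

fun sumset_pow :: "'a::comm_monoid_add set \<Rightarrow> nat \<Rightarrow> 'a set" where
  "sumset_pow S 0 = {0}"
| "sumset_pow S (Suc k) = sumset_pow S k + S"

lemma finite_sumset_pow: "finite S \<Longrightarrow> finite (sumset_pow S k)"
  by (induction k) (simp_all add: finite_set_plus)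

lemma keys_sumset_pow:
  "\<forall>s\<in>S. Poly_Mapping.keys s \<subseteq> V \<Longrightarrow> \<forall>u\<in>sumset_pow S k. Poly_Mapping.keys (u :: 'a \<Rightarrow>\<^sub>0 nat) \<subseteq> V"
  by (induction k) (fastforce simp: keys_plus_nat elim!: set_plus_elim)+

lemma sumset_pow_vanishing:
  fixes G :: "('a \<Rightarrow>\<^sub>0 nat) set"
  assumes "s \<in> sumset_pow G m" "Poly_Mapping.lookup s i = 0"
  shows "s \<in> sumset_pow {u\<in>G. Poly_Mapping.lookup u i = 0} m"
  using assms
proof (induction m arbitrary: s)
  case (Suc m)
  then obtain s' t where st: "s' \<in> sumset_pow G m" "t \<in> G" "s = s' + t"
    by (auto elim: set_plus_elim)
  moreover have "Poly_Mapping.lookup s' i = 0" "Poly_Mapping.lookup t i = 0"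
    using Suc.prems(2) st(3) by (simp_all add: lookup_add)
  ultimately show ?case using Suc.IH by (auto intro!: set_plus_intro)
qed simp

definition deg_in :: "'a set \<Rightarrow> ('a \<Rightarrow>\<^sub>0 nat) \<Rightarrow> nat" where
  "deg_in F \<kappa> = (\<Sum>v\<in>F. Poly_Mapping.lookup \<kappa> v)"

lemma deg_in_add: "deg_in F (\<kappa> + \<mu>) = deg_in F \<kappa> + deg_in F \<mu>"
  by (simp add: deg_in_def lookup_add sum.distrib)

lemma deg_in_zero [simp]: "deg_in F 0 = 0"
  by (simp add: deg_in_def)

lemma deg_in_single: "finite F \<Longrightarrow> deg_in F (Poly_Mapping.single j c) = (if j \<in> F then c else 0)"
  by (simp add: deg_in_def lookup_single when_def)

lemma lookup_le_deg_in: "finite F \<Longrightarrow> j \<in> F \<Longrightarrow> Poly_Mapping.lookup \<kappa> j \<le> deg_in F \<kappa>"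
  unfolding deg_in_def by (rule member_le_sum) auto

lemma deg_in_mono:
  "finite F \<Longrightarrow> (\<And>v. v \<in> F \<Longrightarrow> Poly_Mapping.lookup \<kappa> v \<le> Poly_Mapping.lookup \<mu> v) \<Longrightarrow> deg_in F \<kappa> \<le> deg_in F \<mu>"
  unfolding deg_in_def by (rule sum_mono)

lemma deg_in_mono_set: "finite F \<Longrightarrow> E \<subseteq> F \<Longrightarrow> deg_in E \<kappa> \<le> deg_in F \<kappa>"
  unfolding deg_in_def by (rule sum_mono2) auto

lemma deg_in_pos_iff:
  assumes "finite F"
  shows "1 \<le> deg_in F \<kappa> \<longleftrightarrow> (\<exists>j\<in>F. 1 \<le> Poly_Mapping.lookup \<kappa> j)"
proof
  assume "1 \<le> deg_in F \<kappa>"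
  then show "\<exists>j\<in>F. 1 \<le> Poly_Mapping.lookup \<kappa> j"
    unfolding deg_in_def by (metis sum.neutral less_one not_le)
next
  assume "\<exists>j\<in>F. 1 \<le> Poly_Mapping.lookup \<kappa> j"
  then show "1 \<le> deg_in F \<kappa>" using lookup_le_deg_in[OF assms] by (meson order_trans)
qed

lemma deg_in_pos_if_nonzero:
  assumes "finite F" "Poly_Mapping.keys \<kappa> \<subseteq> F" "\<kappa> \<noteq> 0"
  shows "1 \<le> deg_in F \<kappa>"
proof -
  obtain v where v: "v \<in> Poly_Mapping.keys \<kappa>" using assms(3) by (metis all_not_in_conv keys_eq_empty)
  then have "1 \<le> Poly_Mapping.lookup \<kappa> v" by (simp add: in_keys_iff)
  also have "\<dots> \<le> deg_in F \<kappa>" using lookup_le_deg_in[OF assms(1)] v assms(2) by blast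
  finally show ?thesis .
qed

lemma deg_in_le_if_mono_dvd: "finite F \<Longrightarrow> mono_dvd s \<kappa> \<Longrightarrow> deg_in F s \<le> deg_in F \<kappa>"
  by (auto simp: mono_dvd_def intro: deg_in_mono)

definition uniform_exp :: "'a set \<Rightarrow> nat \<Rightarrow> 'a \<Rightarrow>\<^sub>0 nat" where
  "uniform_exp A c = (\<Sum>v\<in>A. Poly_Mapping.single v c)"

lemma lookup_uniform_exp:
  "finite A \<Longrightarrow> Poly_Mapping.lookup (uniform_exp A c) v = (if v \<in> A then c else 0)"
  by (simp add: uniform_exp_def lookup_sum lookup_single when_def)

lemma keys_uniform_exp: "finite A \<Longrightarrow> Poly_Mapping.keys (uniform_exp A c) \<subseteq> A"
  by (auto simp: in_keys_iff lookup_uniform_exp split: if_splits)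

lemma deg_in_uniform_exp_disjoint: "finite A \<Longrightarrow> F \<inter> A = {} \<Longrightarrow> deg_in F (uniform_exp A c) = 0"
  by (auto simp: deg_in_def lookup_uniform_exp intro!: sum.neutral)

section \<open>The polynomial ring \<open>K[x\<^sub>v : v \<in> V]\<close>\<close>

lemma carrier_poly_ring:
  "carrier (poly_ring V :: 'k::field mpoly ring) = {p. \<forall>m \<in> Poly_Mapping.keys p. Poly_Mapping.keys m \<subseteq> V}"
  by (simp add: poly_ring_def)

lemma poly_ring_simps [simp]:
  "mult (poly_ring V :: 'k::field mpoly ring) = (*)"
  "one (poly_ring V :: 'k::field mpoly ring) = 1"
  "zero (poly_ring V :: 'k::field mpoly ring) = 0"
  "add (poly_ring V :: 'k::field mpoly ring) = (+)"
  by (simp_all add: poly_ring_def)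

lemma mult_in_carrier_poly_ring:
  assumes "p \<in> carrier (poly_ring V)" "q \<in> carrier (poly_ring V)"
  shows "(p * q :: 'k::field mpoly) \<in> carrier (poly_ring V)"
proof -
  have "Poly_Mapping.keys m \<subseteq> V" if m: "m \<in> Poly_Mapping.keys (p * q)" for m
  proof -
    obtain a b where "a \<in> Poly_Mapping.keys p" "b \<in> Poly_Mapping.keys q" "m = a + b"
      using keys_mult[of p q] m by blast
    then show ?thesis using assms by (auto simp: keys_plus_nat carrier_poly_ring)
  qed
  then show ?thesis by (simp add: carrier_poly_ring)
qed

lemma cring_poly_ring: "cring (poly_ring V :: 'k::field mpoly ring)"
proof (rule cringI)
  show "abelian_group (poly_ring V :: 'k mpoly ring)"
  proof (rule abelian_groupI)
    fix x assume "x \<in> carrier (poly_ring V :: 'k mpoly ring)"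
    then show "\<exists>y\<in>carrier (poly_ring V :: 'k mpoly ring). y \<oplus>\<^bsub>poly_ring V\<^esub> x = \<zero>\<^bsub>poly_ring V\<^esub>"
      by (intro bexI[of _ "- x"]) (simp_all add: carrier_poly_ring in_keys_iff)
  qed (use keys_add in \<open>fastforce simp: carrier_poly_ring algebra_simps\<close>)+
  show "comm_monoid (poly_ring V :: 'k mpoly ring)"
    by (rule comm_monoidI) (auto simp: mult_in_carrier_poly_ring algebra_simps, simp add: carrier_poly_ring)
qed (simp add: algebra_simps)

lemma nat_pow_poly_ring: "p [^]\<^bsub>poly_ring V\<^esub> (n::nat) = (p ^ n :: 'k::field mpoly)"
proof -
  interpret cring "poly_ring V :: 'k mpoly ring" by (rule cring_poly_ring)
  show ?thesis by (induction n) (simp_all add: mult.commute)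
qed

lemma monomial_in_carrier_poly_ring:
  "Poly_Mapping.keys h \<subseteq> V \<Longrightarrow> (monomial h :: 'k::field mpoly) \<in> carrier (poly_ring V)"
  by (simp add: carrier_poly_ring monomial_def)

lemma monomial_add: "(monomial (s + t) :: 'k::field mpoly) = monomial s * monomial t"
  by (simp add: monomial_def mult_single)

lemma keys_mult_monomial:
  "Poly_Mapping.keys (r * monomial h :: 'k::field mpoly) = (\<lambda>\<kappa>. \<kappa> + h) ` Poly_Mapping.keys r"
proof -
  have "Poly_Mapping.lookup (r * monomial h) (\<kappa> + h) = Poly_Mapping.lookup r \<kappa>" for \<kappa>
  proof -
    have "(\<Sum>q. Poly_Mapping.lookup (monomial h :: 'k mpoly) q when \<kappa> + h = l + q) = (1 when \<kappa> = l)" for l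
    proof -
      have "(\<lambda>q. Poly_Mapping.lookup (monomial h :: 'k mpoly) q when \<kappa> + h = l + q)
          = (\<lambda>q. (1 when \<kappa> = l) when q = h)"
        by (auto simp: monomial_def lookup_single when_def fun_eq_iff)
      then show ?thesis by (simp only: Sum_any_when_equal)
    qed
    then show ?thesis by (simp add: lookup_mult mult_when)
  qed
  then show ?thesis
    using keys_mult[of r "monomial h :: 'k mpoly"] by (auto simp: monomial_def in_keys_iff)
qed

lemma deg_in_keys_mult:
  assumes "\<forall>x\<in>Poly_Mapping.keys p. i \<le> deg_in F x" "\<forall>y\<in>Poly_Mapping.keys q. j \<le> deg_in F y"
    and "z \<in> Poly_Mapping.keys (p * q :: 'k::field mpoly)"
  shows "i + j \<le> deg_in F z"
proof -
  obtain x y where "x \<in> Poly_Mapping.keys p" "y \<in> Poly_Mapping.keys q" "z = x + y"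
    using keys_mult[of p q] assms(3) by blast
  then show ?thesis using assms(1,2) by (auto simp: deg_in_add intro: add_mono)
qed

lemma lowest_deg_in_part:
  fixes p :: "'k::field mpoly"
  assumes "p \<noteq> 0"
  obtains d p0 p1 where "p = p0 + p1" "p0 \<noteq> 0"
    "\<forall>x\<in>Poly_Mapping.keys p0. deg_in F x = d" "\<forall>x\<in>Poly_Mapping.keys p1. d < deg_in F x"
    "\<forall>x\<in>Poly_Mapping.keys p. d \<le> deg_in F x"
proof -
  define d where "d = Min (deg_in F ` Poly_Mapping.keys p)"
  have keys_ne: "deg_in F ` Poly_Mapping.keys p \<noteq> {}" using assms by simp
  have d_le: "\<forall>x\<in>Poly_Mapping.keys p. d \<le> deg_in F x" by (simp add: d_def)
  obtain x0 where x0: "x0 \<in> Poly_Mapping.keys p" "deg_in F x0 = d"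
    using Min_in[OF _ keys_ne] unfolding d_def by auto
  define p0 where "p0 = Poly_Mapping.mapp (\<lambda>x c. c when deg_in F x = d) p"
  have lookup_p0: "Poly_Mapping.lookup p0 x = (Poly_Mapping.lookup p x when deg_in F x = d)" for x
    by (auto simp: p0_def lookup_mapp when_def in_keys_iff)
  show thesis
  proof
    show "p = p0 + (p - p0)" by simp
    show "p0 \<noteq> 0" using x0 lookup_p0[of x0] by (auto simp: in_keys_iff)
    show "\<forall>x\<in>Poly_Mapping.keys p0. deg_in F x = d" by (auto simp: in_keys_iff lookup_p0)
    show "\<forall>x\<in>Poly_Mapping.keys (p - p0). d < deg_in F x"
    proof
      fix x assume "x \<in> Poly_Mapping.keys (p - p0)"
      then have "x \<in> Poly_Mapping.keys p" "deg_in F x \<noteq> d"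
        by (auto simp: in_keys_iff lookup_minus lookup_p0 when_def split: if_splits)
      then show "d < deg_in F x" using d_le le_neq_implies_less by metis
    qed
  qed (rule d_le)
qed

text \<open>The product of the lowest-degree parts is nonzero and cannot cancel against the other
  partial products, which all have larger degree.\<close>

lemma low_deg_in_key_mult:
  fixes r a :: "'k::field mpoly"
  assumes "x \<in> Poly_Mapping.keys r" "y \<in> Poly_Mapping.keys a"
  shows "\<exists>z\<in>Poly_Mapping.keys (r * a). deg_in F z \<le> deg_in F x + deg_in F y"
proof -
  have nonzero: "r \<noteq> 0" "a \<noteq> 0" using assms by auto
  obtain d r0 r1 where r: "r = r0 + r1" "r0 \<noteq> 0" "\<forall>x\<in>Poly_Mapping.keys r0. deg_in F x = d"
    "\<forall>x\<in>Poly_Mapping.keys r1. d < deg_in F x" "\<forall>x\<in>Poly_Mapping.keys r. d \<le> deg_in F x"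
    by (rule lowest_deg_in_part[OF nonzero(1)])
  obtain e a0 a1 where a: "a = a0 + a1" "a0 \<noteq> 0" "\<forall>y\<in>Poly_Mapping.keys a0. deg_in F y = e"
    "\<forall>y\<in>Poly_Mapping.keys a1. e < deg_in F y" "\<forall>y\<in>Poly_Mapping.keys a. e \<le> deg_in F y"
    by (rule lowest_deg_in_part[OF nonzero(2)])
  have "r0 * a0 \<noteq> 0" using r(2) a(2) by simp
  then obtain z where z: "z \<in> Poly_Mapping.keys (r0 * a0)" by fastforce
  have r3: "\<forall>x\<in>Poly_Mapping.keys r0. d \<le> deg_in F x" "\<forall>x\<in>Poly_Mapping.keys r1. Suc d \<le> deg_in F x"
    using r(3,4) by auto
  have a3: "\<forall>y\<in>Poly_Mapping.keys a0. e \<le> deg_in F y" "\<forall>y\<in>Poly_Mapping.keys a1. Suc e \<le> deg_in F y"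
    using a(3,4) by auto
  have z_deg: "deg_in F z \<le> d + e"
    using z keys_mult[of r0 a0] r(3) a(3) by (force simp: deg_in_add)
  then have "z \<notin> Poly_Mapping.keys (r0 * a1)" "z \<notin> Poly_Mapping.keys (r1 * a0)"
    "z \<notin> Poly_Mapping.keys (r1 * a1)"
    using deg_in_keys_mult[OF r3(1) a3(2)] deg_in_keys_mult[OF r3(2) a3(1)]
      deg_in_keys_mult[OF r3(2) a3(2)] by fastforce+
  moreover have "r * a = r0 * a0 + r0 * a1 + r1 * a0 + r1 * a1"
    by (simp add: r(1) a(1) algebra_simps)
  ultimately have "z \<in> Poly_Mapping.keys (r * a)"
    using z by (simp add: in_keys_iff lookup_add)
  moreover have "d + e \<le> deg_in F x + deg_in F y"
    using r(5) a(5) assms by (simp add: add_mono)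
  ultimately show ?thesis using z_deg by (meson order_trans)
qed

section \<open>Monomial ideals\<close>

text \<open>For upward closed \<open>\<Phi>\<close>, the ideals \<open>supp_ideal V \<Phi>\<close> are exactly the monomial ideals of
  \<open>K[x\<^sub>v : v \<in> V]\<close>.\<close>

definition supp_ideal :: "nat set \<Rightarrow> ((nat \<Rightarrow>\<^sub>0 nat) \<Rightarrow> bool) \<Rightarrow> 'k::field mpoly set" where
  "supp_ideal V \<Phi> = {p \<in> carrier (poly_ring V). \<forall>\<kappa> \<in> Poly_Mapping.keys p. \<Phi> \<kappa>}"

lemma ideal_supp_ideal:
  assumes up: "\<And>\<kappa> \<mu>. \<Phi> \<kappa> \<Longrightarrow> \<Phi> (\<kappa> + \<mu>)"
  shows "ideal (supp_ideal V \<Phi> :: 'k::field mpoly set) (poly_ring V)"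
proof -
  interpret cring "poly_ring V :: 'k mpoly ring" by (rule cring_poly_ring)
  have closed_mult: "p * q \<in> supp_ideal V \<Phi>"
    if "p \<in> supp_ideal V \<Phi>" "q \<in> carrier (poly_ring V)" for p q :: "'k mpoly"
    using that mult_in_carrier_poly_ring[of p V q] keys_mult[of p q] by (fastforce simp: supp_ideal_def up)
  show ?thesis
  proof (rule idealI)
    show "subgroup (supp_ideal V \<Phi> :: 'k mpoly set) (add_monoid (poly_ring V))"
    proof (rule add.subgroupI)
      fix p q :: "'k mpoly"
      assume "p \<in> supp_ideal V \<Phi>" "q \<in> supp_ideal V \<Phi>"
      then show "p \<oplus>\<^bsub>poly_ring V\<^esub> q \<in> supp_ideal V \<Phi>"
        using keys_add[of p q] by (fastforce simp: supp_ideal_def carrier_poly_ring)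
    next
      fix p :: "'k mpoly"
      assume p: "p \<in> supp_ideal V \<Phi>"
      then have "\<ominus>\<^bsub>poly_ring V\<^esub> p = - p"
        by (intro minus_equality) (auto simp: supp_ideal_def carrier_poly_ring)
      then show "\<ominus>\<^bsub>poly_ring V\<^esub> p \<in> supp_ideal V \<Phi>"
        using p by (simp add: supp_ideal_def carrier_poly_ring)
    qed (auto simp: supp_ideal_def)
  qed (use closed_mult in \<open>auto simp: mult.commute ring_axioms\<close>)
qed

lemma supp_idealD: "p \<in> supp_ideal V \<Phi> \<Longrightarrow> \<kappa> \<in> Poly_Mapping.keys p \<Longrightarrow> \<Phi> \<kappa>"
  by (simp add: supp_ideal_def)

lemma supp_ideal_subset_carrier: "supp_ideal V \<Phi> \<subseteq> carrier (poly_ring V)"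
  by (auto simp: supp_ideal_def)

lemma supp_ideal_mono:
  "(\<And>\<kappa>. Poly_Mapping.keys \<kappa> \<subseteq> V \<Longrightarrow> \<Phi> \<kappa> \<Longrightarrow> \<Psi> \<kappa>) \<Longrightarrow> (supp_ideal V \<Phi> :: 'k::field mpoly set) \<subseteq> supp_ideal V \<Psi>"
  unfolding supp_ideal_def by (auto simp: carrier_poly_ring)

lemma monomial_in_supp_ideal_iff:
  "Poly_Mapping.keys \<kappa> \<subseteq> V \<Longrightarrow> (monomial \<kappa> :: 'k::field mpoly) \<in> supp_ideal V \<Phi> \<longleftrightarrow> \<Phi> \<kappa>"
  by (simp add: supp_ideal_def monomial_in_carrier_poly_ring) (simp add: monomial_def)

lemma colon_monomial_supp_ideal:
  assumes x: "Poly_Mapping.keys x \<subseteq> V"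
    and shift: "\<And>\<kappa>. Poly_Mapping.keys \<kappa> \<subseteq> V \<Longrightarrow> \<Phi> (\<kappa> + x) \<longleftrightarrow> \<Psi> \<kappa>"
  shows "{r \<in> carrier (poly_ring V). r \<otimes>\<^bsub>poly_ring V\<^esub> monomial x \<in> supp_ideal V \<Phi>}
    = (supp_ideal V \<Psi> :: 'k::field mpoly set)"
  using mult_in_carrier_poly_ring[OF _ monomial_in_carrier_poly_ring[OF x]] shift
  by (auto simp: supp_ideal_def keys_mult_monomial carrier_poly_ring)

definition monomial_ideal :: "nat set \<Rightarrow> (nat \<Rightarrow>\<^sub>0 nat) set \<Rightarrow> 'k::field mpoly set" where
  "monomial_ideal V S = supp_ideal V (\<lambda>\<kappa>. \<exists>s\<in>S. mono_dvd s \<kappa>)"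

lemma ideal_monomial_ideal: "ideal (monomial_ideal V S :: 'k::field mpoly set) (poly_ring V)"
  unfolding monomial_ideal_def by (rule ideal_supp_ideal) (auto intro: mono_dvd_add_right)

lemma monomial_in_monomial_ideal:
  "s \<in> S \<Longrightarrow> Poly_Mapping.keys s \<subseteq> V \<Longrightarrow> (monomial s :: 'k::field mpoly) \<in> monomial_ideal V S"
  by (auto simp: monomial_ideal_def monomial_in_supp_ideal_iff mono_dvd_def)

text \<open>Peel off one term at a time: each term of \<open>p\<close> is a multiple of some generator.\<close>

lemma monomial_ideal_subset:
  assumes J: "ideal J (poly_ring V)" and gens: "monomial ` S \<subseteq> J"
  shows "(monomial_ideal V S :: 'k::field mpoly set) \<subseteq> J"
proof
  fix p :: "'k mpoly"
  assume "p \<in> monomial_ideal V S"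
  then show "p \<in> J"
  proof (induction "card (Poly_Mapping.keys p)" arbitrary: p)
    case 0
    then show ?case using additive_subgroup.zero_closed[OF ideal.axioms(1)[OF J]] by simp
  next
    case (Suc N)
    then obtain \<kappa> where \<kappa>: "\<kappa> \<in> Poly_Mapping.keys p"
      by (metis card.empty empty_iff nat.distinct(1) subsetI subset_antisym)
    have p: "p \<in> carrier (poly_ring V)"
      using Suc.prems supp_ideal_subset_carrier by (auto simp: monomial_ideal_def)
    obtain s where s: "s \<in> S" "mono_dvd s \<kappa>"
      using supp_idealD[OF Suc.prems[unfolded monomial_ideal_def] \<kappa>] by blast
    define t where "t = Poly_Mapping.single \<kappa> (Poly_Mapping.lookup p \<kappa>)"
    have "Poly_Mapping.single (\<kappa> - s) (Poly_Mapping.lookup p \<kappa>) \<in> carrier (poly_ring V)"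
      using p \<kappa> keys_minus_nat_subset[of \<kappa> s] by (auto simp: carrier_poly_ring)
    moreover have "t = Poly_Mapping.single (\<kappa> - s) (Poly_Mapping.lookup p \<kappa>) * monomial s"
      by (simp add: t_def monomial_def mult_single mono_dvd_diff_add[OF s(2)])
    ultimately have t: "t \<in> J"
      using ideal.I_l_closed[OF J] gens s(1) by fastforce
    have keys_diff: "Poly_Mapping.keys (p - t) = Poly_Mapping.keys p - {\<kappa>}"
      by (auto simp: t_def in_keys_iff lookup_single when_def lookup_minus split: if_splits)
    have "p - t \<in> monomial_ideal V S"
      using Suc.prems keys_diff by (auto simp: monomial_ideal_def supp_ideal_def carrier_poly_ring)
    moreover have "N = card (Poly_Mapping.keys (p - t))"
      using Suc.hyps(2) keys_diff \<kappa> by (metis card_Diff_singleton diff_Suc_1)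
    ultimately have "p - t \<in> J" using Suc.hyps(1) by blast
    then show ?case
      using additive_subgroup.a_closed[OF ideal.axioms(1)[OF J] _ t] by (metis diff_add_cancel poly_ring_simps(4))
  qed
qed

lemma genideal_eq_monomial_ideal:
  assumes S: "\<forall>s\<in>S. Poly_Mapping.keys s \<subseteq> V"
  shows "genideal (poly_ring V) (monomial ` S :: 'k::field mpoly set) = monomial_ideal V S"
proof
  interpret cring "poly_ring V :: 'k mpoly ring" by (rule cring_poly_ring)
  have gens: "monomial ` S \<subseteq> (monomial_ideal V S :: 'k mpoly set)"
    using S monomial_in_monomial_ideal by blast
  then show "genideal (poly_ring V) (monomial ` S) \<subseteq> (monomial_ideal V S :: 'k mpoly set)"
    by (rule genideal_minimal[OF ideal_monomial_ideal])
  have "monomial ` S \<subseteq> carrier (poly_ring V :: 'k mpoly ring)"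
    using S by (auto intro: monomial_in_carrier_poly_ring)
  then show "monomial_ideal V S \<subseteq> genideal (poly_ring V) (monomial ` S :: 'k mpoly set)"
    by (intro monomial_ideal_subset genideal_ideal genideal_self)
qed

lemma mult_mem_monomial_ideal:
  assumes "p \<in> monomial_ideal V S" "q \<in> monomial_ideal V T"
  shows "(p * q :: 'k::field mpoly) \<in> monomial_ideal V (S + T)"
proof -
  have "\<exists>u\<in>S + T. mono_dvd u \<kappa>" if \<kappa>: "\<kappa> \<in> Poly_Mapping.keys (p * q)" for \<kappa>
  proof -
    obtain a b where ab: "a \<in> Poly_Mapping.keys p" "b \<in> Poly_Mapping.keys q" "\<kappa> = a + b"
      using keys_mult[of p q] \<kappa> by blast
    obtain s where "s \<in> S" "mono_dvd s a"
      using supp_idealD[OF assms(1)[unfolded monomial_ideal_def] ab(1)] by blast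
    moreover obtain t where "t \<in> T" "mono_dvd t b"
      using supp_idealD[OF assms(2)[unfolded monomial_ideal_def] ab(2)] by blast
    ultimately show ?thesis using ab(3) mono_dvd_add_mono by blast
  qed
  moreover have "p \<in> carrier (poly_ring V)" "q \<in> carrier (poly_ring V)"
    using assms supp_ideal_subset_carrier by (auto simp: monomial_ideal_def)
  ultimately show ?thesis
    unfolding monomial_ideal_def supp_ideal_def using mult_in_carrier_poly_ring by blast
qed

lemma ideal_prod_monomial_ideal:
  assumes S: "\<forall>s\<in>S. Poly_Mapping.keys s \<subseteq> V" and T: "\<forall>t\<in>T. Poly_Mapping.keys t \<subseteq> V"
  shows "ideal_prod (poly_ring V) (monomial_ideal V S) (monomial_ideal V T)
    = (monomial_ideal V (S + T) :: 'k::field mpoly set)"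
proof
  show "ideal_prod (poly_ring V) (monomial_ideal V S) (monomial_ideal V T)
    \<subseteq> (monomial_ideal V (S + T) :: 'k mpoly set)"
  proof
    fix x :: "'k mpoly"
    assume "x \<in> ideal_prod (poly_ring V) (monomial_ideal V S) (monomial_ideal V T)"
    then show "x \<in> monomial_ideal V (S + T)"
    proof (induction rule: ideal_prod.induct)
      case (prod p q)
      then show ?case using mult_mem_monomial_ideal by simp
    next
      case (sum p q)
      then show ?case by (intro additive_subgroup.a_closed[OF ideal.axioms(1)[OF ideal_monomial_ideal]])
    qed
  qed
  have "monomial (s + t) \<in> ideal_prod (poly_ring V) (monomial_ideal V S) (monomial_ideal V T :: 'k mpoly set)"
    if "s \<in> S" "t \<in> T" for s t
  proof -
    have "(monomial s :: 'k mpoly) \<in> monomial_ideal V S" "(monomial t :: 'k mpoly) \<in> monomial_ideal V T"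
      using that S T by (simp_all add: monomial_in_monomial_ideal)
    then show ?thesis
      using ideal_prod.prod[of "monomial s" _ "monomial t" _ "poly_ring V"] by (simp add: monomial_add)
  qed
  then show "(monomial_ideal V (S + T) :: 'k mpoly set)
    \<subseteq> ideal_prod (poly_ring V) (monomial_ideal V S) (monomial_ideal V T)"
    by (intro monomial_ideal_subset ring.ideal_prod_is_ideal[OF cring.axioms(1)[OF cring_poly_ring]]
        ideal_monomial_ideal) (auto elim!: set_plus_elim)
qed

lemma ideal_power_monomial_ideal:
  assumes "\<forall>s\<in>S. Poly_Mapping.keys s \<subseteq> V"
  shows "ideal_power (poly_ring V) (monomial_ideal V S) k = (monomial_ideal V (sumset_pow S k) :: 'k::field mpoly set)"
proof -
  interpret cring "poly_ring V :: 'k mpoly ring" by (rule cring_poly_ring)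
  show ?thesis
  proof (induction k)
    case 0
    then show ?case by (auto simp: ideal_power_0 monomial_ideal_def supp_ideal_def mono_dvd_def)
  next
    case (Suc k)
    then show ?case
      using ideal_prod_monomial_ideal[OF keys_sumset_pow[OF assms] assms] by (simp add: ideal_power_Suc)
  qed
qed

text \<open>\<open>var_ideal_pow V F m\<close> is the \<open>m\<close>-th power of the prime \<open>P\<^sub>F = (x\<^sub>j : j \<in> F)\<close>.\<close>

definition var_ideal_pow :: "nat set \<Rightarrow> nat set \<Rightarrow> nat \<Rightarrow> 'k::field mpoly set" where
  "var_ideal_pow V F m = supp_ideal V (\<lambda>\<kappa>. m \<le> deg_in F \<kappa>)"

lemma ideal_var_ideal_pow: "ideal (var_ideal_pow V F m :: 'k::field mpoly set) (poly_ring V)"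
  unfolding var_ideal_pow_def by (rule ideal_supp_ideal) (simp add: deg_in_add)

lemma var_ideal_pow_primary:
  assumes "r \<in> carrier (poly_ring V)" "a \<in> carrier (poly_ring V)"
    and "(r * a :: 'k::field mpoly) \<in> var_ideal_pow V F m" "a \<notin> var_ideal_pow V F m"
  shows "r \<in> var_ideal_pow V F 1"
proof (rule ccontr)
  assume "r \<notin> var_ideal_pow V F 1"
  then obtain x where "x \<in> Poly_Mapping.keys r" "deg_in F x = 0"
    using assms(1) by (auto simp: var_ideal_pow_def supp_ideal_def)
  moreover obtain y where "y \<in> Poly_Mapping.keys a" "deg_in F y < m"
    using assms(2,4) by (auto simp: var_ideal_pow_def supp_ideal_def not_le)
  ultimately obtain z where "z \<in> Poly_Mapping.keys (r * a)" "deg_in F z < m"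
    using low_deg_in_key_mult[of x r y a F] by fastforce
  then show False using assms(3) by (auto simp: var_ideal_pow_def supp_ideal_def)
qed

lemma primeideal_var_ideal: "primeideal (var_ideal_pow V F 1 :: 'k::field mpoly set) (poly_ring V)"
proof (rule primeidealI)
  show "ideal (var_ideal_pow V F 1 :: 'k mpoly set) (poly_ring V)" by (rule ideal_var_ideal_pow)
  show "cring (poly_ring V :: 'k mpoly ring)" by (rule cring_poly_ring)
  have "(1 :: 'k mpoly) \<notin> var_ideal_pow V F 1" by (simp add: var_ideal_pow_def supp_ideal_def)
  moreover have "(1 :: 'k mpoly) \<in> carrier (poly_ring V)" by (simp add: carrier_poly_ring)
  ultimately show "carrier (poly_ring V) \<noteq> (var_ideal_pow V F 1 :: 'k mpoly set)" by blast
next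
  fix a b :: "'k mpoly"
  assume "a \<in> carrier (poly_ring V)" "b \<in> carrier (poly_ring V)"
    and "a \<otimes>\<^bsub>poly_ring V\<^esub> b \<in> var_ideal_pow V F 1"
  then show "a \<in> var_ideal_pow V F 1 \<or> b \<in> var_ideal_pow V F 1"
    using var_ideal_pow_primary[of a V b F 1] by auto
qed

lemma var_ideal_inj:
  assumes "finite V" "Q \<subseteq> V" "F \<subseteq> V"
    and "(var_ideal_pow V Q 1 :: 'k::field mpoly set) = var_ideal_pow V F 1"
  shows "Q = F"
proof -
  have var_mem: "(monomial (Poly_Mapping.single j 1) :: 'k mpoly) \<in> var_ideal_pow V X 1 \<longleftrightarrow> j \<in> X"
    if "j \<in> V" "X \<subseteq> V" for j X
    using that \<open>finite V\<close> finite_subset[OF that(2)]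
    by (simp add: var_ideal_pow_def monomial_in_supp_ideal_iff deg_in_single)
  show ?thesis using var_mem[OF _ assms(2)] var_mem[OF _ assms(3)] assms by blast
qed

lemma power_in_var_ideal_pow:
  assumes "(r :: 'k::field mpoly) \<in> var_ideal_pow V F 1"
  shows "r ^ m \<in> var_ideal_pow V F m"
proof (induction m)
  case 0
  then show ?case by (simp add: var_ideal_pow_def supp_ideal_def carrier_poly_ring)
next
  case (Suc m)
  have "\<forall>x\<in>Poly_Mapping.keys r. 1 \<le> deg_in F x" "r \<in> carrier (poly_ring V)"
    using assms by (auto simp: var_ideal_pow_def supp_ideal_def)
  with Suc show ?case
    using deg_in_keys_mult[of r 1 F "r ^ m" m] mult_in_carrier_poly_ring[of r V "r ^ m"]
    by (auto simp: var_ideal_pow_def supp_ideal_def)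
qed

lemma var_ideal_in_Ass:
  assumes x: "Poly_Mapping.keys x \<subseteq> V"
    and colon: "\<And>\<kappa>. Poly_Mapping.keys \<kappa> \<subseteq> V \<Longrightarrow> \<Phi> (\<kappa> + x) \<longleftrightarrow> 1 \<le> deg_in Q \<kappa>"
  shows "var_ideal_pow V Q 1 \<in> Ass (poly_ring V) (supp_ideal V \<Phi> :: 'k::field mpoly set)"
proof -
  have "{r \<in> carrier (poly_ring V). r \<otimes>\<^bsub>poly_ring V\<^esub> monomial x \<in> supp_ideal V \<Phi>}
    = (var_ideal_pow V Q 1 :: 'k mpoly set)"
    unfolding var_ideal_pow_def using x colon by (rule colon_monomial_supp_ideal)
  then show ?thesis
    unfolding Ass_def using primeideal_var_ideal monomial_in_carrier_poly_ring[OF x] by blast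
qed

lemma prime_colon_var_ideal_pow:
  assumes m: "1 \<le> m" and a: "a \<in> carrier (poly_ring V)"
    and prime: "primeideal (P :: 'k::field mpoly set) (poly_ring V)"
    and P: "P = {r \<in> carrier (poly_ring V). r * a \<in> var_ideal_pow V F m}"
  shows "P = var_ideal_pow V F 1"
proof
  have "a \<notin> var_ideal_pow V F m"
  proof
    assume "a \<in> var_ideal_pow V F m"
    then have "carrier (poly_ring V) \<subseteq> P"
      using ideal.I_l_closed[OF ideal_var_ideal_pow] by (auto simp: P)
    then show False
      using primeideal.I_notcarr[OF prime] ideal.Icarr[OF primeideal.axioms(1)[OF prime]] by blast
  qed
  then show "P \<subseteq> var_ideal_pow V F 1"
    using var_ideal_pow_primary[OF _ a] by (auto simp: P)
  show "var_ideal_pow V F 1 \<subseteq> P"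
  proof
    fix r :: "'k mpoly"
    assume r: "r \<in> var_ideal_pow V F 1"
    then have r_carrier: "r \<in> carrier (poly_ring V)" by (simp add: var_ideal_pow_def supp_ideal_def)
    have "r ^ m * a \<in> var_ideal_pow V F m"
      using ideal.I_r_closed[OF ideal_var_ideal_pow power_in_var_ideal_pow[OF r] a] by simp
    then have "r [^]\<^bsub>poly_ring V\<^esub> m \<in> P"
      using power_in_var_ideal_pow[OF r]
      by (simp add: P nat_pow_poly_ring var_ideal_pow_def supp_ideal_def)
    then show "r \<in> P" using primeideal.mem_if_pow_mem[OF prime r_carrier] m by blast
  qed
qed

lemma prime_colon_Inter_var_ideal_pow:
  assumes fin: "finite \<F>" and m: "1 \<le> m" and a: "a \<in> carrier (poly_ring V)"
    and prime: "primeideal (P :: 'k::field mpoly set) (poly_ring V)"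
    and P: "P = {r \<in> carrier (poly_ring V).
      r \<otimes>\<^bsub>poly_ring V\<^esub> a \<in> supp_ideal V (\<lambda>\<kappa>. \<forall>F\<in>\<F>. m \<le> deg_in F \<kappa>)}"
  shows "\<exists>F\<in>\<F>. P = var_ideal_pow V F 1"
proof -
  define C where "C F = {r \<in> carrier (poly_ring V). r * a \<in> (var_ideal_pow V F m :: 'k mpoly set)}" for F
  have "\<exists>F\<in>\<F>. C F \<subseteq> P"
  proof (rule primeideal.Inter_subset_imp_subset[OF prime fin])
    show "C F \<subseteq> carrier (poly_ring V)" for F by (auto simp: C_def)
    show "x \<otimes>\<^bsub>poly_ring V\<^esub> y \<in> C F" if "x \<in> C F" "y \<in> carrier (poly_ring V)" for F x y
    proof -
      have "y * (x * a) \<in> var_ideal_pow V F m"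
        using ideal.I_l_closed[OF ideal_var_ideal_pow, of "x * a" V F m y] that by (simp add: C_def)
      moreover have "x * y \<in> carrier (poly_ring V)"
        using that by (auto simp: C_def intro: mult_in_carrier_poly_ring)
      ultimately show ?thesis by (simp add: C_def ac_simps)
    qed
    show "carrier (poly_ring V) \<inter> (\<Inter>F\<in>\<F>. C F) \<subseteq> P"
    proof
      fix r assume "r \<in> carrier (poly_ring V) \<inter> (\<Inter>F\<in>\<F>. C F)"
      then have r: "r \<in> carrier (poly_ring V)" "\<forall>F\<in>\<F>. r * a \<in> var_ideal_pow V F m"
        by (auto simp: C_def)
      then have "r * a \<in> supp_ideal V (\<lambda>\<kappa>. \<forall>F\<in>\<F>. m \<le> deg_in F \<kappa>)"
        using mult_in_carrier_poly_ring[OF r(1) a] unfolding var_ideal_pow_def supp_ideal_def by blast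
      then show "r \<in> P" using r(1) by (simp add: P)
    qed
  qed
  then obtain F where F: "F \<in> \<F>" "C F \<subseteq> P" by blast
  have "supp_ideal V (\<lambda>\<kappa>. \<forall>F\<in>\<F>. m \<le> deg_in F \<kappa>) \<subseteq> (var_ideal_pow V F m :: 'k mpoly set)"
    using F(1) by (auto simp: var_ideal_pow_def supp_ideal_def)
  then have "P \<subseteq> C F" by (auto simp: P C_def)
  with F(2) have "P = C F" by blast
  then show ?thesis using prime_colon_var_ideal_pow[OF m a prime] F(1) by (auto simp: C_def)
qed

section \<open>Vertex covers and symbolic powers\<close>

definition is_cover :: "nat set \<Rightarrow> (nat \<Rightarrow>\<^sub>0 nat) set \<Rightarrow> nat set \<Rightarrow> bool" where
  "is_cover V S F \<longleftrightarrow> F \<subseteq> V \<and> (\<forall>s\<in>S. \<exists>j\<in>F. 1 \<le> Poly_Mapping.lookup s j)"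

definition minimal_cover :: "nat set \<Rightarrow> (nat \<Rightarrow>\<^sub>0 nat) set \<Rightarrow> nat set \<Rightarrow> bool" where
  "minimal_cover V S F \<longleftrightarrow> is_cover V S F \<and> (\<forall>E. E \<subset> F \<longrightarrow> \<not> is_cover V S E)"

lemma minimal_cover_finite: "finite V \<Longrightarrow> minimal_cover V S F \<Longrightarrow> finite F"
  by (auto simp: minimal_cover_def is_cover_def intro: finite_subset)

lemma finite_minimal_covers: "finite V \<Longrightarrow> finite {F. minimal_cover V S F}"
  by (rule finite_subset[of _ "Pow V"]) (auto simp: minimal_cover_def is_cover_def)

lemma exists_minimal_cover_subset:
  assumes "finite F" "is_cover V S F"
  shows "\<exists>E\<subseteq>F. minimal_cover V S E"
  using assms
proof (induction F rule: finite_psubset_induct)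
  case (psubset F)
  show ?case
  proof (cases "minimal_cover V S F")
    case False
    then obtain E where "E \<subset> F" "is_cover V S E"
      using psubset.prems by (auto simp: minimal_cover_def)
    then show ?thesis using psubset.IH by (meson psubset_imp_subset order_trans)
  qed blast
qed

lemma deg_in_sumset_pow:
  assumes "is_cover V S F" "finite F" "s \<in> sumset_pow S m"
  shows "m \<le> deg_in F s"
  using assms(3)
proof (induction m arbitrary: s)
  case (Suc m)
  then obtain s' t where "s' \<in> sumset_pow S m" "t \<in> S" "s = s' + t"
    by (auto elim: set_plus_elim)
  moreover have "1 \<le> deg_in F t"
    using assms(1) \<open>t \<in> S\<close> deg_in_pos_iff[OF assms(2), of t] by (auto simp: is_cover_def)
  ultimately show ?case using Suc.IH[of s'] by (simp add: deg_in_add)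
qed simp

text \<open>\<open>symbolic_power V S m\<close> is the intersection of the \<open>P\<^sub>F\<^sup>m\<close> over the minimal vertex covers \<open>F\<close>
  of the generators \<open>S\<close>; for square-free \<open>S\<close> it is the \<open>m\<close>-th symbolic power of the ideal they
  generate.\<close>

definition symbolic_power :: "nat set \<Rightarrow> (nat \<Rightarrow>\<^sub>0 nat) set \<Rightarrow> nat \<Rightarrow> 'k::field mpoly set" where
  "symbolic_power V S m = supp_ideal V (\<lambda>\<kappa>. \<forall>F. minimal_cover V S F \<longrightarrow> m \<le> deg_in F \<kappa>)"

lemma monomial_ideal_sumset_pow_subset_symbolic_power:
  assumes "finite V"
  shows "(monomial_ideal V (sumset_pow S m) :: 'k::field mpoly set) \<subseteq> symbolic_power V S m"
proof -
  have "m \<le> deg_in F \<kappa>" if "s \<in> sumset_pow S m" "mono_dvd s \<kappa>" "minimal_cover V S F" for s \<kappa> F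
  proof -
    have "finite F" using minimal_cover_finite[OF assms that(3)] .
    then show ?thesis
      using deg_in_sumset_pow[of V S F s m] deg_in_le_if_mono_dvd[of F s \<kappa>] that
      by (fastforce simp: minimal_cover_def)
  qed
  then show ?thesis by (auto simp: monomial_ideal_def symbolic_power_def supp_ideal_def)
qed

lemma minimal_cover_colon_witness:
  assumes V: "finite V" and F: "minimal_cover V S F" and k: "1 \<le> k"
  obtains \<beta> where "Poly_Mapping.keys \<beta> \<subseteq> V"
    "\<And>\<kappa>. (\<forall>E. minimal_cover V S E \<longrightarrow> k \<le> deg_in E (\<kappa> + \<beta>)) \<longleftrightarrow> 1 \<le> deg_in F \<kappa>"
proof (cases "F = {}")
  case True
  then have "\<not> k \<le> deg_in F \<kappa>" "\<not> 1 \<le> deg_in F \<kappa>" for \<kappa> using k by (simp_all add: deg_in_def)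
  then show ?thesis using F by (intro that[of 0]) (simp, blast)
next
  case False
  then obtain j where j: "j \<in> F" by blast
  have finF: "finite F" and FV: "F \<subseteq> V"
    using minimal_cover_finite[OF V F] F by (auto simp: minimal_cover_def is_cover_def)
  txt \<open>Every other minimal cover meets \<open>V - F\<close>, where \<open>\<beta>\<close> is already large, so only the
    condition for \<open>F\<close> itself survives.\<close>
  define \<beta> where "\<beta> = uniform_exp (V - F) k + Poly_Mapping.single j (k - 1)"
  have \<beta>_keys: "Poly_Mapping.keys \<beta> \<subseteq> V"
    using keys_uniform_exp[of "V - F" k] V j FV by (auto simp: \<beta>_def keys_plus_nat)
  have deg_F: "deg_in F (\<kappa> + \<beta>) = deg_in F \<kappa> + (k - 1)" for \<kappa>
    using V j by (simp add: \<beta>_def deg_in_add deg_in_uniform_exp_disjoint deg_in_single[OF finF])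
  have other: "k \<le> deg_in E (\<kappa> + \<beta>)" if E: "minimal_cover V S E" "E \<noteq> F" for E \<kappa>
  proof -
    obtain i where i: "i \<in> E" "i \<notin> F"
      using E F by (auto simp: minimal_cover_def)
    then have "i \<in> V - F" using E by (auto simp: minimal_cover_def is_cover_def)
    then have "k \<le> Poly_Mapping.lookup (\<kappa> + \<beta>) i"
      using V by (simp add: \<beta>_def lookup_add lookup_uniform_exp)
    also have "\<dots> \<le> deg_in E (\<kappa> + \<beta>)"
      using lookup_le_deg_in[OF minimal_cover_finite[OF V E(1)] i(1)] .
    finally show ?thesis .
  qed
  have "(\<forall>E. minimal_cover V S E \<longrightarrow> k \<le> deg_in E (\<kappa> + \<beta>)) \<longleftrightarrow> k \<le> deg_in F (\<kappa> + \<beta>)" for \<kappa>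
    using F other by blast
  moreover have "k \<le> deg_in F (\<kappa> + \<beta>) \<longleftrightarrow> 1 \<le> deg_in F \<kappa>" for \<kappa>
    using deg_F[of \<kappa>] k by linarith
  ultimately have "(\<forall>E. minimal_cover V S E \<longrightarrow> k \<le> deg_in E (\<kappa> + \<beta>)) \<longleftrightarrow> 1 \<le> deg_in F \<kappa>" for \<kappa>
    by blast
  with \<beta>_keys show ?thesis by (rule that)
qed

lemma Ass_symbolic_power:
  assumes V: "finite V" and m: "1 \<le> m"
  shows "Ass (poly_ring V) (symbolic_power V S m :: 'k::field mpoly set)
    = (\<lambda>F. var_ideal_pow V F 1) ` {F. minimal_cover V S F}"
proof
  show "Ass (poly_ring V) (symbolic_power V S m :: 'k mpoly set)
    \<subseteq> (\<lambda>F. var_ideal_pow V F 1) ` {F. minimal_cover V S F}"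
  proof
    fix P :: "'k mpoly set"
    assume "P \<in> Ass (poly_ring V) (symbolic_power V S m)"
    then obtain a where "primeideal P (poly_ring V)" "a \<in> carrier (poly_ring V)"
      "P = {r \<in> carrier (poly_ring V). r \<otimes>\<^bsub>poly_ring V\<^esub> a
        \<in> supp_ideal V (\<lambda>\<kappa>. \<forall>F\<in>{F. minimal_cover V S F}. m \<le> deg_in F \<kappa>)}"
      by (auto simp: Ass_def symbolic_power_def)
    then show "P \<in> (\<lambda>F. var_ideal_pow V F 1) ` {F. minimal_cover V S F}"
      using prime_colon_Inter_var_ideal_pow[OF finite_minimal_covers[OF V] m] by blast
  qed
  show "(\<lambda>F. var_ideal_pow V F 1) ` {F. minimal_cover V S F}
    \<subseteq> Ass (poly_ring V) (symbolic_power V S m :: 'k mpoly set)"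
  proof clarify
    fix F assume F: "minimal_cover V S F"
    obtain \<beta> where \<beta>: "Poly_Mapping.keys \<beta> \<subseteq> V"
      "\<And>\<kappa>. (\<forall>E. minimal_cover V S E \<longrightarrow> m \<le> deg_in E (\<kappa> + \<beta>)) \<longleftrightarrow> 1 \<le> deg_in F \<kappa>"
      using minimal_cover_colon_witness[OF V F m] by blast
    show "var_ideal_pow V F 1 \<in> Ass (poly_ring V) (symbolic_power V S m :: 'k mpoly set)"
      unfolding symbolic_power_def by (rule var_ideal_in_Ass[OF \<beta>(1) \<beta>(2)])
  qed
qed

lemma copersistent_if_powers_eq_symbolic_powers:
  assumes "finite V" and "\<And>k. 1 \<le> k \<Longrightarrow> ideal_power (poly_ring V) J k = symbolic_power V S k"
  shows "copersistent (poly_ring V) (J :: 'k::field mpoly set)"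
  using assms by (simp add: copersistent_def Ass_symbolic_power)

section \<open>Powers of square-free monomial ideals\<close>

definition squarefree_exps :: "nat set \<Rightarrow> (nat \<Rightarrow>\<^sub>0 nat) set \<Rightarrow> bool" where
  "squarefree_exps V S \<longleftrightarrow> (\<forall>u\<in>S. Poly_Mapping.keys u \<subseteq> V \<and> (\<forall>v. Poly_Mapping.lookup u v \<le> 1))"

lemma monomial_ideal_eq_symbolic_power_1:
  assumes sq: "squarefree_exps V S" and V: "finite V"
  shows "(monomial_ideal V S :: 'k::field mpoly set) = symbolic_power V S 1"
proof
  show "(monomial_ideal V S :: 'k mpoly set) \<subseteq> symbolic_power V S 1"
    using monomial_ideal_sumset_pow_subset_symbolic_power[OF V, of S 1] by simp
  have "\<exists>s\<in>S. mono_dvd s \<kappa>"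
    if \<kappa>: "Poly_Mapping.keys \<kappa> \<subseteq> V" "\<forall>F. minimal_cover V S F \<longrightarrow> 1 \<le> deg_in F \<kappa>" for \<kappa>
  proof (rule ccontr)
    assume no_dvd: "\<not> (\<exists>s\<in>S. mono_dvd s \<kappa>)"
    have "is_cover V S (V - Poly_Mapping.keys \<kappa>)"
      unfolding is_cover_def
    proof (intro conjI ballI)
      fix s assume s: "s \<in> S"
      then obtain v where "Poly_Mapping.lookup \<kappa> v < Poly_Mapping.lookup s v"
        using no_dvd by (auto simp: mono_dvd_def not_le)
      moreover have "Poly_Mapping.lookup s v \<le> 1" "Poly_Mapping.keys s \<subseteq> V"
        using sq s by (auto simp: squarefree_exps_def)
      ultimately show "\<exists>j\<in>V - Poly_Mapping.keys \<kappa>. 1 \<le> Poly_Mapping.lookup s j"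
        by (intro bexI[of _ v]) (auto simp: in_keys_iff)
    qed auto
    then obtain F where F: "F \<subseteq> V - Poly_Mapping.keys \<kappa>" "minimal_cover V S F"
      using exists_minimal_cover_subset V by blast
    then have "deg_in F \<kappa> = 0" by (auto simp: deg_in_def in_keys_iff intro!: sum.neutral)
    then show False using \<kappa>(2) F(2) by auto
  qed
  then show "(symbolic_power V S 1 :: 'k mpoly set) \<subseteq> monomial_ideal V S"
    unfolding symbolic_power_def monomial_ideal_def by (rule supp_ideal_mono)
qed

lemma minimal_cover_private_gen:
  assumes sq: "squarefree_exps V S" and F: "minimal_cover V S F" and j: "j \<in> F"
  shows "\<exists>u\<in>S. Poly_Mapping.lookup u j = 1 \<and> (\<forall>i\<in>F - {j}. Poly_Mapping.lookup u i = 0)"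
proof -
  have "\<not> is_cover V S (F - {j})" using F j by (auto simp: minimal_cover_def)
  then obtain u where u: "u \<in> S" "\<forall>i\<in>F - {j}. Poly_Mapping.lookup u i = 0"
    using F by (auto simp: minimal_cover_def is_cover_def not_le)
  obtain i where "i \<in> F" "1 \<le> Poly_Mapping.lookup u i"
    using F u(1) by (auto simp: minimal_cover_def is_cover_def)
  then have "1 \<le> Poly_Mapping.lookup u j" using u(2) by (cases "i = j") auto
  then show ?thesis using sq u by (auto simp: squarefree_exps_def intro!: bexI[of _ u] le_antisym)
qed

lemma exists_sumset_pow_below_on_cover:
  assumes sq: "squarefree_exps V S" and F: "minimal_cover V S F" and V: "finite V"
    and "m \<le> deg_in F \<kappa>"
  shows "\<exists>s\<in>sumset_pow S m. (\<forall>v\<in>F. Poly_Mapping.lookup s v \<le> Poly_Mapping.lookup \<kappa> v)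
    \<and> (\<forall>v. Poly_Mapping.lookup s v \<le> m)"
  using assms(4)
proof (induction m arbitrary: \<kappa>)
  case (Suc m)
  have finF: "finite F" using minimal_cover_finite[OF V F] .
  obtain j where j: "j \<in> F" "1 \<le> Poly_Mapping.lookup \<kappa> j"
    using Suc.prems deg_in_pos_iff[OF finF, of \<kappa>] by auto
  define \<kappa>' where "\<kappa>' = \<kappa> - Poly_Mapping.single j 1"
  have \<kappa>: "\<kappa> = \<kappa>' + Poly_Mapping.single j 1"
    using mono_dvd_diff_add[of "Poly_Mapping.single j 1" \<kappa>] j(2) by (simp add: \<kappa>'_def mono_dvd_single_iff)
  then have "m \<le> deg_in F \<kappa>'"
    using Suc.prems j(1) by (simp add: deg_in_add deg_in_single[OF finF])
  then obtain s where s: "s \<in> sumset_pow S m" "\<forall>v\<in>F. Poly_Mapping.lookup s v \<le> Poly_Mapping.lookup \<kappa>' v"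
    "\<forall>v. Poly_Mapping.lookup s v \<le> m"
    using Suc.IH by blast
  obtain u where u: "u \<in> S" "Poly_Mapping.lookup u j = 1" "\<forall>i\<in>F - {j}. Poly_Mapping.lookup u i = 0"
    using minimal_cover_private_gen[OF sq F j(1)] by blast
  have "Poly_Mapping.lookup (s + u) v \<le> Suc m" for v
  proof -
    have "Poly_Mapping.lookup u v \<le> 1" using sq u(1) by (simp add: squarefree_exps_def)
    then show ?thesis using s(3)[rule_format, of v] by (simp add: lookup_add)
  qed
  moreover have "\<forall>v\<in>F. Poly_Mapping.lookup (s + u) v \<le> Poly_Mapping.lookup \<kappa> v"
    using s(2) u(2,3) by (subst \<kappa>) (auto simp: lookup_add lookup_single when_def)
  ultimately show ?case
    using s(1) u(1) by (intro bexI[of _ "s + u"]) auto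
qed auto

lemma sumset_pow_dvd_outside_cover:
  assumes sq: "squarefree_exps V G" and F: "minimal_cover V G F" and V: "finite V"
    and deg: "m \<le> deg_in F x"
  shows "\<exists>s\<in>sumset_pow G m. mono_dvd s (uniform_exp (V - F) m + x)"
proof -
  obtain s where s: "s \<in> sumset_pow G m" "\<forall>v\<in>F. Poly_Mapping.lookup s v \<le> Poly_Mapping.lookup x v"
    "\<forall>v. Poly_Mapping.lookup s v \<le> m"
    using exists_sumset_pow_below_on_cover[OF sq F V deg] by blast
  have s_V: "Poly_Mapping.keys s \<subseteq> V"
    using keys_sumset_pow[of G V] sq s(1) by (auto simp: squarefree_exps_def)
  have "Poly_Mapping.lookup s v \<le> Poly_Mapping.lookup (uniform_exp (V - F) m + x) v" for v
  proof (cases "v \<in> V")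
    case True
    then show ?thesis using s(2,3) V
      by (cases "v \<in> F") (auto simp: lookup_add lookup_uniform_exp intro: trans_le_add1 trans_le_add2)
  next
    case False
    then have "Poly_Mapping.lookup s v = 0" using s_V by (auto simp: in_keys_iff)
    then show ?thesis by simp
  qed
  then show ?thesis using s(1) by (auto simp: mono_dvd_def)
qed

lemma sum_deg_in_diff_less:
  assumes V: "finite V" and S: "finite S" "s0 \<in> S"
    and less: "deg_in V (s0 - (h + w)) < deg_in V (s0 - h)"
  shows "(\<Sum>s\<in>S. deg_in V (s - (h + w))) < (\<Sum>s\<in>S. deg_in V (s - h))"
proof (rule sum_strict_mono_ex1[OF S(1)])
  show "\<forall>s\<in>S. deg_in V (s - (h + w)) \<le> deg_in V (s - h)"
    by (auto intro!: deg_in_mono[OF V] simp: lookup_minus_nat lookup_add)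
qed (use S(2) less in blast)

text \<open>\<open>colon_vars S h\<close> is the set of variables in the colon ideal \<open>(I : x\<^sup>h)\<close> of \<open>I = (x\<^sup>s : s \<in> S)\<close>,
  whose generators are the \<open>x\<^sup>s\<^sup>-\<^sup>h\<close>.\<close>

definition colon_vars :: "('a \<Rightarrow>\<^sub>0 nat) set \<Rightarrow> ('a \<Rightarrow>\<^sub>0 nat) \<Rightarrow> 'a set" where
  "colon_vars S h = {j. \<exists>s\<in>S. mono_dvd s (Poly_Mapping.single j 1 + h)}"

lemma exists_least_colon_gen:
  assumes "\<exists>s\<in>S. mono_dvd s (\<kappa> + h)" "\<forall>j\<in>colon_vars S h. Poly_Mapping.lookup \<kappa> j = 0"
  obtains s0 where "s0 \<in> S" "\<forall>j\<in>colon_vars S h. Poly_Mapping.lookup (s0 - h) j = 0"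
    "\<And>s. s \<in> S \<Longrightarrow> \<forall>j\<in>colon_vars S h. Poly_Mapping.lookup (s - h) j = 0 \<Longrightarrow>
      deg_in V (s0 - h) \<le> deg_in V (s - h)"
proof -
  obtain s1 where s1: "s1 \<in> S" "mono_dvd s1 (\<kappa> + h)" using assms(1) by blast
  have "Poly_Mapping.lookup (s1 - h) j = 0" if "j \<in> colon_vars S h" for j
  proof -
    have "Poly_Mapping.lookup s1 j \<le> Poly_Mapping.lookup \<kappa> j + Poly_Mapping.lookup h j"
      using s1(2) by (simp add: mono_dvd_def lookup_add)
    then show ?thesis using assms(2) that by (simp add: lookup_minus_nat)
  qed
  then show thesis
    using that ex_has_least_nat[of "\<lambda>s. s \<in> S \<and> (\<forall>j\<in>colon_vars S h. Poly_Mapping.lookup (s - h) j = 0)"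
        s1 "\<lambda>s. deg_in V (s - h)"] s1(1)
    by blast
qed

lemma no_dvd_below_least_colon_gen:
  assumes V: "finite V"
    and least: "\<And>s. s \<in> S \<Longrightarrow> \<forall>j\<in>colon_vars S h. Poly_Mapping.lookup (s - h) j = 0 \<Longrightarrow>
      d \<le> deg_in V (s - h)"
    and w: "deg_in V w < d" "\<forall>j\<in>colon_vars S h. Poly_Mapping.lookup w j = 0"
  shows "\<not> (\<exists>s\<in>S. mono_dvd s (h + w))"
proof
  assume "\<exists>s\<in>S. mono_dvd s (h + w)"
  then obtain s where s: "s \<in> S" "mono_dvd s (h + w)" by blast
  then have below: "Poly_Mapping.lookup (s - h) v \<le> Poly_Mapping.lookup w v" for v
    by (simp add: mono_dvd_def lookup_minus_nat lookup_add) (metis add_diff_cancel_left' diff_le_mono)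
  then have "\<forall>j\<in>colon_vars S h. Poly_Mapping.lookup (s - h) j = 0" using w(2) by (metis le_zero_eq)
  then have "d \<le> deg_in V (s - h)" using least s(1) by blast
  also have "\<dots> \<le> deg_in V w" using deg_in_mono[OF V] below by blast
  finally show False using w(1) by simp
qed

text \<open>If \<open>(I : x\<^sup>h)\<close> is not generated by its variables, then \<open>h\<close> can be raised, staying outside \<open>I\<close>,
  so that the generators \<open>x\<^sup>s\<^sup>-\<^sup>h\<close> of the colon get smaller: raise \<open>h\<close> by all but one variable of a
  least generator avoiding the colon variables.\<close>

lemma colon_descent_step:
  assumes S: "finite S" "\<forall>s\<in>S. Poly_Mapping.keys s \<subseteq> V" and V: "finite V"
    and h: "\<not> (\<exists>s\<in>S. mono_dvd s h)"
    and s0: "s0 \<in> S" "\<forall>j\<in>colon_vars S h. Poly_Mapping.lookup (s0 - h) j = 0"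
    and least: "\<And>s. s \<in> S \<Longrightarrow> \<forall>j\<in>colon_vars S h. Poly_Mapping.lookup (s - h) j = 0 \<Longrightarrow>
      deg_in V (s0 - h) \<le> deg_in V (s - h)"
  obtains w where "Poly_Mapping.keys w \<subseteq> V" "\<not> (\<exists>s\<in>S. mono_dvd s (h + w))"
    "(\<Sum>s\<in>S. deg_in V (s - (h + w))) < (\<Sum>s\<in>S. deg_in V (s - h))"
proof -
  define w where "w = s0 - h"
  have s0_dvd: "mono_dvd s0 (h + w)"
    unfolding mono_dvd_def w_def lookup_add lookup_minus_nat by linarith
  then have "w \<noteq> 0" using h s0(1) by auto
  then obtain j0 where "j0 \<in> Poly_Mapping.keys w" by (metis all_not_in_conv keys_eq_empty)
  then have j0: "1 \<le> Poly_Mapping.lookup w j0" by (simp add: in_keys_iff)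
  define w' where "w' = w - Poly_Mapping.single j0 1"
  have w_eq: "w = w' + Poly_Mapping.single j0 1"
    using mono_dvd_diff_add[of "Poly_Mapping.single j0 1" w] j0 by (simp add: w'_def mono_dvd_single_iff)
  have w_V: "Poly_Mapping.keys w \<subseteq> V"
    using keys_minus_nat_subset[of s0 h] S(2) s0(1) unfolding w_def by blast
  then have w'_V: "Poly_Mapping.keys w' \<subseteq> V" by (auto simp: w_eq keys_plus_nat)
  have "w' \<noteq> 0"
  proof
    assume "w' = 0"
    then have "mono_dvd s0 (Poly_Mapping.single j0 1 + h)" using s0_dvd by (simp add: w_eq add.commute)
    then show False using s0 j0 by (auto simp: colon_vars_def w_def)
  qed
  then have deg_w': "1 \<le> deg_in V w'" using deg_in_pos_if_nonzero[OF V w'_V] by blast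
  have "j0 \<in> V" using j0 w_V by (auto simp: in_keys_iff)
  then have deg_w: "deg_in V w = deg_in V w' + 1" by (simp add: w_eq deg_in_add deg_in_single[OF V])
  have "\<not> (\<exists>s\<in>S. mono_dvd s (h + w'))"
    using s0(2) deg_w by (intro no_dvd_below_least_colon_gen[OF V least])
      (auto simp: w_def[symmetric] w_eq lookup_add)
  moreover have "s0 - (h + w') = w - w'" by (simp add: w_def diff_diff_add)
  then have "deg_in V (s0 - (h + w')) = 1"
    using \<open>j0 \<in> V\<close> by (simp add: w_eq deg_in_single[OF V])
  then have "deg_in V (s0 - (h + w')) < deg_in V (s0 - h)"
    using deg_w deg_w' by (simp add: w_def[symmetric])
  ultimately show thesis using that w'_V sum_deg_in_diff_less[OF V S(1) s0(1)] by blast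
qed

lemma exists_monomial_colon_var_ideal:
  assumes S: "finite S" "\<forall>s\<in>S. Poly_Mapping.keys s \<subseteq> V" and V: "finite V"
    and h: "\<not> (\<exists>s\<in>S. mono_dvd s h)"
  obtains g Q where "Poly_Mapping.keys g \<subseteq> V" "Q \<subseteq> V"
    "\<And>\<kappa>. Poly_Mapping.keys \<kappa> \<subseteq> V \<Longrightarrow> (\<exists>s\<in>S. mono_dvd s (\<kappa> + (h + g))) \<longleftrightarrow> 1 \<le> deg_in Q \<kappa>"
proof -
  obtain g where g: "Poly_Mapping.keys g \<subseteq> V" "\<not> (\<exists>s\<in>S. mono_dvd s (h + g))"
    and g_min: "\<And>g'. Poly_Mapping.keys g' \<subseteq> V \<Longrightarrow> \<not> (\<exists>s\<in>S. mono_dvd s (h + g')) \<Longrightarrow>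
      (\<Sum>s\<in>S. deg_in V (s - (h + g))) \<le> (\<Sum>s\<in>S. deg_in V (s - (h + g')))"
    using ex_has_least_nat[of "\<lambda>g. Poly_Mapping.keys g \<subseteq> V \<and> \<not> (\<exists>s\<in>S. mono_dvd s (h + g))" 0
        "\<lambda>g. \<Sum>s\<in>S. deg_in V (s - (h + g))"] h
    by auto
  define Q where "Q = V \<inter> colon_vars S (h + g)"
  have Q: "Q \<subseteq> V" "finite Q" using V by (auto simp: Q_def)
  have "(\<exists>s\<in>S. mono_dvd s (\<kappa> + (h + g))) \<longleftrightarrow> 1 \<le> deg_in Q \<kappa>" if \<kappa>: "Poly_Mapping.keys \<kappa> \<subseteq> V" for \<kappa>
  proof
    assume dvd: "\<exists>s\<in>S. mono_dvd s (\<kappa> + (h + g))"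
    show "1 \<le> deg_in Q \<kappa>"
    proof (rule ccontr)
      assume "\<not> 1 \<le> deg_in Q \<kappa>"
      then have "\<forall>j\<in>colon_vars S (h + g). Poly_Mapping.lookup \<kappa> j = 0"
        using \<kappa> deg_in_pos_iff[OF Q(2), of \<kappa>] unfolding Q_def
        by (metis IntI in_keys_iff subsetD less_one not_le)
      then obtain w where "Poly_Mapping.keys w \<subseteq> V" "\<not> (\<exists>s\<in>S. mono_dvd s (h + g + w))"
        "(\<Sum>s\<in>S. deg_in V (s - (h + g + w))) < (\<Sum>s\<in>S. deg_in V (s - (h + g)))"
        using colon_descent_step[OF S V g(2)] exists_least_colon_gen[OF dvd] by metis
      then show False using g_min[of "g + w"] g(1) by (auto simp: keys_plus_nat add.assoc)
    qed
  next
    assume "1 \<le> deg_in Q \<kappa>"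
    then obtain j s where "1 \<le> Poly_Mapping.lookup \<kappa> j" "s \<in> S"
      "mono_dvd s (Poly_Mapping.single j 1 + (h + g))"
      using deg_in_pos_iff[OF Q(2)] by (auto simp: Q_def colon_vars_def)
    then show "\<exists>s\<in>S. mono_dvd s (\<kappa> + (h + g))"
      by (meson mono_dvd_trans mono_dvd_add_mono mono_dvd_refl mono_dvd_single_iff)
  qed
  then show thesis using that g(1) Q(1) by blast
qed

lemma minimal_cover_if_var_ideal_in_Ass_power:
  assumes sq: "squarefree_exps V G" and V: "finite V"
    and cop: "copersistent (poly_ring V) (monomial_ideal V G :: 'k::field mpoly set)"
    and m: "1 \<le> m" and Q: "Q \<subseteq> V"
    and Ass: "var_ideal_pow V Q 1 \<in> Ass (poly_ring V) (ideal_power (poly_ring V) (monomial_ideal V G :: 'k mpoly set) m)"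
  shows "minimal_cover V G Q"
proof -
  have GV: "\<forall>s\<in>G. Poly_Mapping.keys s \<subseteq> V" using sq by (simp add: squarefree_exps_def)
  have "Ass (poly_ring V) (ideal_power (poly_ring V) (monomial_ideal V G :: 'k mpoly set) m)
    \<subseteq> Ass (poly_ring V) (monomial_ideal V G :: 'k mpoly set)"
    using Ass_ideal_power_subset_if_copersistent[OF cop _ m] ideal_power_monomial_ideal[OF GV, of 1]
    by simp
  also have "\<dots> = (\<lambda>F. var_ideal_pow V F 1) ` {F. minimal_cover V G F}"
    by (simp only: monomial_ideal_eq_symbolic_power_1[OF sq V] Ass_symbolic_power[OF V order_refl])
  finally obtain F where F: "minimal_cover V G F" "var_ideal_pow V Q 1 = (var_ideal_pow V F 1 :: 'k mpoly set)"
    using Ass by blast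
  have "F \<subseteq> V" using F(1) by (simp add: minimal_cover_def is_cover_def)
  then have "Q = F" using var_ideal_inj[OF V Q] F(2) by blast
  then show ?thesis using F(1) by simp
qed

text \<open>If \<open>x\<^sup>\<kappa>\<close> lies in \<open>I\<^sup>(\<^sup>m\<^sup>)\<close> but not in \<open>I\<^sup>m\<close>, raise \<open>\<kappa>\<close> to \<open>\<kappa> + g\<close> with \<open>(I\<^sup>m : x\<^sup>\<kappa>\<^sup>+\<^sup>g) = P\<^sub>Q\<close>.
  Copersistence makes \<open>P\<^sub>Q\<close> associated to \<open>I\<close>, so \<open>Q\<close> is a minimal cover. As \<open>\<kappa> + g\<close> has
  \<open>Q\<close>-degree at least \<open>m\<close>, multiplying \<open>x\<^sup>\<kappa>\<^sup>+\<^sup>g\<close> by the \<open>m\<close>-th powers of the variables outside \<open>Q\<close>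
  lands in \<open>I\<^sup>m\<close>, contradicting the colon.\<close>

lemma sumset_pow_dvd_if_copersistent:
  assumes sq: "squarefree_exps V G" and V: "finite V" and G: "finite G"
    and cop: "copersistent (poly_ring V) (monomial_ideal V G :: 'k::field mpoly set)"
    and m: "1 \<le> m" and \<kappa>: "Poly_Mapping.keys \<kappa> \<subseteq> V"
    and deg: "\<forall>F. minimal_cover V G F \<longrightarrow> m \<le> deg_in F \<kappa>"
  shows "\<exists>s\<in>sumset_pow G m. mono_dvd s \<kappa>"
proof (rule ccontr)
  have GV: "\<forall>s\<in>G. Poly_Mapping.keys s \<subseteq> V" using sq by (simp add: squarefree_exps_def)
  assume no_dvd: "\<not> (\<exists>s\<in>sumset_pow G m. mono_dvd s \<kappa>)"
  obtain g Q where g: "Poly_Mapping.keys g \<subseteq> V" and Q: "Q \<subseteq> V"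
    and colon: "\<And>\<mu>. Poly_Mapping.keys \<mu> \<subseteq> V \<Longrightarrow>
      (\<exists>s\<in>sumset_pow G m. mono_dvd s (\<mu> + (\<kappa> + g))) \<longleftrightarrow> 1 \<le> deg_in Q \<mu>"
    using exists_monomial_colon_var_ideal[OF finite_sumset_pow[OF G] keys_sumset_pow[OF GV] V no_dvd]
    by metis
  have "var_ideal_pow V Q 1 \<in> Ass (poly_ring V) (ideal_power (poly_ring V) (monomial_ideal V G) m :: 'k mpoly set)"
    unfolding ideal_power_monomial_ideal[OF GV] unfolding monomial_ideal_def
    by (rule var_ideal_in_Ass[of "\<kappa> + g"]) (use \<kappa> g colon in \<open>auto simp: keys_plus_nat\<close>)
  then have Q_cover: "minimal_cover V G Q"
    by (rule minimal_cover_if_var_ideal_in_Ass_power[OF sq V cop m Q])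
  then have "m \<le> deg_in Q \<kappa>" using deg by blast
  then have "m \<le> deg_in Q (\<kappa> + g)" by (simp add: deg_in_add)
  then obtain s where "s \<in> sumset_pow G m" "mono_dvd s (uniform_exp (V - Q) m + (\<kappa> + g))"
    using sumset_pow_dvd_outside_cover[OF sq Q_cover V] by blast
  moreover have "Poly_Mapping.keys (uniform_exp (V - Q) m) \<subseteq> V"
    using keys_uniform_exp[of "V - Q" m] V by auto
  ultimately have "1 \<le> deg_in Q (uniform_exp (V - Q) m)" using colon[of "uniform_exp (V - Q) m"] by blast
  moreover have "deg_in Q (uniform_exp (V - Q) m) = 0" using V by (simp add: deg_in_uniform_exp_disjoint)
  ultimately show False by simp
qed

lemma ideal_power_eq_symbolic_power_if_copersistent:
  assumes sq: "squarefree_exps V G" and V: "finite V" and G: "finite G"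
    and cop: "copersistent (poly_ring V) (monomial_ideal V G :: 'k::field mpoly set)"
    and m: "1 \<le> m"
  shows "ideal_power (poly_ring V) (monomial_ideal V G) m = (symbolic_power V G m :: 'k mpoly set)"
proof
  have GV: "\<forall>s\<in>G. Poly_Mapping.keys s \<subseteq> V" using sq by (simp add: squarefree_exps_def)
  then show "ideal_power (poly_ring V) (monomial_ideal V G) m \<subseteq> (symbolic_power V G m :: 'k mpoly set)"
    using monomial_ideal_sumset_pow_subset_symbolic_power[OF V] ideal_power_monomial_ideal by metis
  show "(symbolic_power V G m :: 'k mpoly set) \<subseteq> ideal_power (poly_ring V) (monomial_ideal V G) m"
    unfolding symbolic_power_def ideal_power_monomial_ideal[OF GV] unfolding monomial_ideal_def
    using sumset_pow_dvd_if_copersistent[OF sq V G cop m] by (rule supp_ideal_mono)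
qed

lemma minimal_cover_deletion:
  assumes V: "finite V" and F: "minimal_cover V G F"
  shows "\<exists>E\<subseteq>F - {i}. minimal_cover (V - {i}) {u\<in>G. Poly_Mapping.lookup u i = 0} E"
proof -
  have "is_cover (V - {i}) {u\<in>G. Poly_Mapping.lookup u i = 0} (F - {i})"
    unfolding is_cover_def
  proof (intro conjI ballI)
    show "F - {i} \<subseteq> V - {i}" using F by (auto simp: minimal_cover_def is_cover_def)
    fix u assume u: "u \<in> {u\<in>G. Poly_Mapping.lookup u i = 0}"
    then obtain j where "j \<in> F" "1 \<le> Poly_Mapping.lookup u j"
      using F by (auto simp: minimal_cover_def is_cover_def)
    moreover have "j \<noteq> i" using u calculation by auto
    ultimately show "\<exists>j\<in>F - {i}. 1 \<le> Poly_Mapping.lookup u j" by blast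
  qed
  then show ?thesis using exists_minimal_cover_subset minimal_cover_finite[OF V F] by blast
qed

lemma ideal_power_deletion_eq_symbolic_power:
  fixes G :: "(nat \<Rightarrow>\<^sub>0 nat) set" and i :: nat
  defines "G' \<equiv> {u\<in>G. Poly_Mapping.lookup u i = 0}"
  assumes V: "finite V" and GV: "\<forall>s\<in>G. Poly_Mapping.keys s \<subseteq> V"
    and pow: "ideal_power (poly_ring V) (monomial_ideal V G) m = (symbolic_power V G m :: 'k::field mpoly set)"
  shows "ideal_power (poly_ring (V - {i})) (monomial_ideal (V - {i}) G') m
    = (symbolic_power (V - {i}) G' m :: 'k mpoly set)"
proof -
  have G'V: "\<forall>s\<in>G'. Poly_Mapping.keys s \<subseteq> V - {i}" using GV by (auto simp: G'_def in_keys_iff)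
  have powJ: "ideal_power (poly_ring (V - {i})) (monomial_ideal (V - {i}) G') m
    = (monomial_ideal (V - {i}) (sumset_pow G' m) :: 'k mpoly set)"
    by (rule ideal_power_monomial_ideal[OF G'V])
  have "\<exists>s\<in>sumset_pow G' m. mono_dvd s \<kappa>"
    if \<kappa>: "Poly_Mapping.keys \<kappa> \<subseteq> V - {i}"
      and deg: "\<forall>E. minimal_cover (V - {i}) G' E \<longrightarrow> m \<le> deg_in E \<kappa>" for \<kappa>
  proof -
    have "m \<le> deg_in F \<kappa>" if F: "minimal_cover V G F" for F
      using minimal_cover_deletion[OF V F, of i] deg deg_in_mono_set[OF minimal_cover_finite[OF V F]]
      unfolding G'_def by (meson Diff_subset order_trans)
    moreover have \<kappa>_V: "Poly_Mapping.keys \<kappa> \<subseteq> V" using \<kappa> by blast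
    ultimately have "(monomial \<kappa> :: 'k mpoly) \<in> symbolic_power V G m"
      unfolding symbolic_power_def monomial_in_supp_ideal_iff[OF \<kappa>_V] by blast
    then have "(monomial \<kappa> :: 'k mpoly) \<in> monomial_ideal V (sumset_pow G m)"
      by (simp only: pow[symmetric] ideal_power_monomial_ideal[OF GV])
    then obtain s where s: "s \<in> sumset_pow G m" "mono_dvd s \<kappa>"
      unfolding monomial_ideal_def monomial_in_supp_ideal_iff[OF \<kappa>_V] by blast
    have "Poly_Mapping.lookup \<kappa> i = 0" using \<kappa> by (auto simp: in_keys_iff)
    then have "Poly_Mapping.lookup s i = 0" using s(2) by (simp add: mono_dvd_def) (metis le_zero_eq)
    then show ?thesis using sumset_pow_vanishing[OF s(1)] s(2) by (auto simp: G'_def)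
  qed
  then have "(symbolic_power (V - {i}) G' m :: 'k mpoly set)
    \<subseteq> ideal_power (poly_ring (V - {i})) (monomial_ideal (V - {i}) G') m"
    unfolding symbolic_power_def powJ unfolding monomial_ideal_def by (rule supp_ideal_mono)
  moreover have "ideal_power (poly_ring (V - {i})) (monomial_ideal (V - {i}) G') m
    \<subseteq> (symbolic_power (V - {i}) G' m :: 'k mpoly set)"
    using monomial_ideal_sumset_pow_subset_symbolic_power[of "V - {i}"] V powJ by simp
  ultimately show ?thesis by blast
qed

theorem proposition3p23:
  fixes n i :: nat and G :: "(nat \<Rightarrow>\<^sub>0 nat) set" and I :: "'k::field mpoly set"
  assumes "minimal_sqfree_gens {1..n} G"
    and "I = genideal (poly_ring {1..n}) (monomial ` G)"
    and "1 \<le> i" and "i \<le> n"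
    and "copersistent (poly_ring {1..n}) I"
  shows "copersistent (poly_ring ({1..n} - {i})) (deletion {1..n} G i :: 'k mpoly set)"
proof -
  define V where "V = {1..n}"
  define G' where "G' = {u\<in>G. Poly_Mapping.lookup u i = 0}"
  have V: "finite V" by (simp add: V_def)
  have G: "finite G" and sq: "squarefree_exps V G"
    using assms(1) by (auto simp: minimal_sqfree_gens_def squarefree_exps_def V_def)
  have GV: "\<forall>s\<in>G. Poly_Mapping.keys s \<subseteq> V" using sq by (simp add: squarefree_exps_def)
  then have G'V: "\<forall>s\<in>G'. Poly_Mapping.keys s \<subseteq> V - {i}" by (auto simp: G'_def in_keys_iff)
  have "I = monomial_ideal V G"
    using assms(2) genideal_eq_monomial_ideal[OF GV] by (simp add: V_def)
  with assms(5) have cop_I: "copersistent (poly_ring V) (monomial_ideal V G :: 'k mpoly set)"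
    by (simp add: V_def)
  have "ideal_power (poly_ring (V - {i})) (monomial_ideal (V - {i}) G') m
      = (symbolic_power (V - {i}) G' m :: 'k mpoly set)" if "1 \<le> m" for m
    unfolding G'_def
    by (rule ideal_power_deletion_eq_symbolic_power[OF V GV
          ideal_power_eq_symbolic_power_if_copersistent[OF sq V G cop_I that]])
  then have "copersistent (poly_ring (V - {i})) (monomial_ideal (V - {i}) G' :: 'k mpoly set)"
    using V by (intro copersistent_if_powers_eq_symbolic_powers) auto
  moreover have "deletion V G i = (monomial_ideal (V - {i}) G' :: 'k mpoly set)"
    using genideal_eq_monomial_ideal[OF G'V] by (simp add: deletion_def G'_def)
  ultimately show ?thesis by (simp add: V_def)
qed

end
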